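(* Let $A$ be a positive word in the band generators with $e\le A\le\delta$. Then $A$ has no decomposition $A=BaCbD$ with $B,C,D$ positive words (possibly empty), $a,b$ band generators, and $(a,b)$ an obstructing pair.
   Context: $B_n$ is the $n$-string braid group with band generators $a_{ts}=(\sigma_{t-1}\cdots\sigma_{s+1})\sigma_s(\sigma_{s+1}^{-1}\cdots\sigma_{t-1}^{-1})$, $n\ge t>s\ge1$; $e$ is the identity, and a positive word is a word in positive powers of the $a_{ts}$. $\delta=a_{n(n-1)}\cdots a_{21}$. For $V,W\in B_n$, $V\le W$ means $W=P_1VP_2$ with $P_1,P_2$ represented by positive words. An ordered pair $(a,b)$ of band generators is an obstructing pair if, for some integers $n\ge t>s>r>q\ge1$, it is one of: (1) $(a_{tr},a_{sq})$; (2) $(a_{sq},a_{tr})$; (3) $(a_{sr},a_{ts})$; (4) $(a_{ts},a_{tr})$; (5) $(a_{tr},a_{sr})$; (6) $(a_{ts},a_{ts})$ (for cases (4)-(6) only the indices appearing matter). *)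

theory Defs
  imports Main
begin

text \<open>Words in the Artin generators: a letter (i, True) is sigma_i, (i, False) is sigma_i inverse.\<close>
type_synonym sword = "(nat \<times> bool) list"

inductive braid_eq :: "nat \<Rightarrow> sword \<Rightarrow> sword \<Rightarrow> bool" for n :: nat where
  refl: "braid_eq n w w"
| sym: "braid_eq n u w \<Longrightarrow> braid_eq n w u"
| trans: "braid_eq n u v \<Longrightarrow> braid_eq n v w \<Longrightarrow> braid_eq n u w"
| ctxt: "braid_eq n u w \<Longrightarrow> braid_eq n (x @ u @ y) (x @ w @ y)"
| cancel: "1 \<le> i \<Longrightarrow> i < n \<Longrightarrow> braid_eq n [(i, b), (i, \<not> b)] []"
| comm: "1 \<le> i \<Longrightarrow> i < n \<Longrightarrow> 1 \<le> j \<Longrightarrow> j < n \<Longrightarrow> i + 2 \<le> j \<Longrightarrow>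
          braid_eq n [(i, True), (j, True)] [(j, True), (i, True)]"
| braid: "1 \<le> i \<Longrightarrow> i + 1 < n \<Longrightarrow>
          braid_eq n [(i, True), (i+1, True), (i, True)] [(i+1, True), (i, True), (i+1, True)]"

text \<open>Band generator a_ts, encoded as the pair (t, s), valid when n >= t > s >= 1.\<close>
definition valid_band :: "nat \<Rightarrow> nat \<times> nat \<Rightarrow> bool" where
  "valid_band n a \<longleftrightarrow> n \<ge> fst a \<and> fst a > snd a \<and> snd a \<ge> 1"

text \<open>a_ts = (sigma_(t-1) ... sigma_(s+1)) sigma_s (sigma_(s+1)^-1 ... sigma_(t-1)^-1).\<close>
definition band_word :: "nat \<times> nat \<Rightarrow> sword" where
  "band_word a = (let t = fst a; s = snd a in
     map (\<lambda>i. (i, True)) (rev [s+1..<t]) @ [(s, True)] @ map (\<lambda>i. (i, False)) [s+1..<t])"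

definition positive_word :: "nat \<Rightarrow> (nat \<times> nat) list \<Rightarrow> bool" where
  "positive_word n w \<longleftrightarrow> (\<forall>a \<in> set w. valid_band n a)"

definition expand :: "(nat \<times> nat) list \<Rightarrow> sword" where
  "expand w = concat (map band_word w)"

definition delta :: "nat \<Rightarrow> (nat \<times> nat) list" where
  "delta n = map (\<lambda>k. (k+1, k)) (rev [1..<n])"

definition braid_le :: "nat \<Rightarrow> sword \<Rightarrow> sword \<Rightarrow> bool" where
  "braid_le n V W \<longleftrightarrow> (\<exists>P1 P2. positive_word n P1 \<and> positive_word n P2 \<and>
      braid_eq n W (expand P1 @ V @ expand P2))"

definition obstructing :: "nat \<Rightarrow> nat \<times> nat \<Rightarrow> nat \<times> nat \<Rightarrow> bool" where
  "obstructing n a b \<longleftrightarrow>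
     (\<exists>t s r q. n \<ge> t \<and> t > s \<and> s > r \<and> r > q \<and> q \<ge> 1 \<and>
        ((a = (t, r) \<and> b = (s, q)) \<or> (a = (s, q) \<and> b = (t, r))))
   \<or> (\<exists>t s r. n \<ge> t \<and> t > s \<and> s > r \<and> r \<ge> 1 \<and>
        ((a = (s, r) \<and> b = (t, s)) \<or> (a = (t, s) \<and> b = (t, r)) \<or> (a = (t, r) \<and> b = (s, r))))
   \<or> (\<exists>t s. n \<ge> t \<and> t > s \<and> s \<ge> 1 \<and> a = (t, s) \<and> b = (t, s))"

end

theory Submission
  imports Defs "HOL-Combinatorics.Transposition"
begin

text \<open>
  The permutation homomorphism from \<open>B\<^sub>n\<close> to \<open>S\<^sub>n\<close> sends \<open>a\<^sub>t\<^sub>s\<close> to the transposition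
  \<open>(s t)\<close> and \<open>\<delta>\<close> to the \<open>n\<close>-cycle \<open>x \<mapsto> x - 1\<close>, \<open>1 \<mapsto> n\<close>; the exponent sum shows that every
  positive word equal to \<open>\<delta>\<close> has exactly \<open>n - 1\<close> letters. So if \<open>A \<le> \<delta>\<close> and
  \<open>A = B a C b D\<close>, the \<open>n\<close>-cycle is a product \<open>X \<tau>\<^sub>a Y \<tau>\<^sub>b Z\<close> of \<open>n - 1\<close> transpositions.
  Conjugating \<open>\<tau>\<^sub>a\<close> and \<open>\<tau>\<^sub>b\<close> to the right end (Hurwitz moves) writes \<open>\<delta> \<tau>\<^sub>b \<tau>\<^sub>a\<close> as a
  product of \<open>n - 3\<close> transpositions, whose orbits lie in the connected components of a
  graph with \<open>n - 3\<close> edges, hence there are at least three of them. But for an obstructing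
  pair, \<open>\<delta> \<tau>\<^sub>b \<tau>\<^sub>a\<close> is again an \<open>n\<close>-cycle.
\<close>

section \<open>Permutation and exponent sum of a braid word\<close>

fun artin_perm :: "sword \<Rightarrow> nat \<Rightarrow> nat" where
  "artin_perm [] = id"
| "artin_perm ((i, _) # w) = transpose i (Suc i) \<circ> artin_perm w"

definition exp_sum :: "sword \<Rightarrow> int" where
  "exp_sum w = (\<Sum>(_, b) \<leftarrow> w. if b then 1 else -1)"

lemma artin_perm_append: "artin_perm (u @ w) = artin_perm u \<circ> artin_perm w"
  by (induction u rule: artin_perm.induct) (auto simp: comp_assoc)

lemma braid_eq_imp_artin_perm_eq: "braid_eq n u w \<Longrightarrow> artin_perm u = artin_perm w"
  by (induction rule: braid_eq.induct) (auto simp: artin_perm_append fun_eq_iff transpose_def)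

lemma braid_eq_imp_exp_sum_eq: "braid_eq n u w \<Longrightarrow> exp_sum u = exp_sum w"
  by (induction rule: braid_eq.induct) (auto simp: exp_sum_def)

definition band_transp :: "nat \<times> nat \<Rightarrow> nat \<Rightarrow> nat" where
  "band_transp a = transpose (snd a) (fst a)"

fun band_perm :: "(nat \<times> nat) list \<Rightarrow> nat \<Rightarrow> nat" where
  "band_perm [] = id"
| "band_perm (a # L) = band_transp a \<circ> band_perm L"

lemma band_perm_append: "band_perm (L @ L') = band_perm L \<circ> band_perm L'"
  by (induction L) (auto simp: comp_assoc)

lemma band_word_Suc:
  "s < t \<Longrightarrow> band_word (Suc t, s) = (t, True) # band_word (t, s) @ [(t, False)]"
  by (simp add: band_word_def)

lemma artin_perm_band_word: "s < t \<Longrightarrow> artin_perm (band_word (t, s)) = transpose s t"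
proof (induction t)
  case (Suc t)
  show ?case
  proof (cases "s = t")
    case True
    then show ?thesis by (simp add: band_word_def)
  next
    case False
    with Suc have "s < t" by simp
    then have "artin_perm (band_word (Suc t, s))
        = transpose t (Suc t) \<circ> transpose s t \<circ> transpose t (Suc t)"
      using Suc.IH by (simp add: band_word_Suc artin_perm_append comp_assoc)
    also have "\<dots> = transpose s (Suc t)"
      using \<open>s < t\<close> by (auto simp: fun_eq_iff transpose_def)
    finally show ?thesis .
  qed
qed simp

lemma exp_sum_band_word: "exp_sum (band_word a) = 1"
  by (simp add: band_word_def exp_sum_def Let_def comp_def sum_list_triv)

lemma artin_perm_expand: "positive_word n L \<Longrightarrow> artin_perm (expand L) = band_perm L"
  by (induction L) (auto simp: expand_def positive_word_def valid_band_def artin_perm_append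
      artin_perm_band_word band_transp_def)

lemma exp_sum_expand: "exp_sum (expand L) = int (length L)"
proof (induction L)
  case (Cons a L)
  then show ?case
    using exp_sum_band_word[of a] by (simp add: expand_def exp_sum_def)
qed (simp add: expand_def exp_sum_def)

definition cycle_down :: "nat \<Rightarrow> nat \<Rightarrow> nat" where
  "cycle_down n x = (if x = 1 then n else if 2 \<le> x \<and> x \<le> n then x - 1 else x)"

lemma delta_Suc: "1 \<le> n \<Longrightarrow> delta (Suc n) = (Suc n, n) # delta n"
  by (simp add: delta_def)

lemma artin_perm_delta: "1 \<le> n \<Longrightarrow> artin_perm (expand (delta n)) = cycle_down n"
proof (induction n rule: nat_induct_at_least)
  case base
  then show ?case by (auto simp: delta_def expand_def cycle_down_def fun_eq_iff)
next
  case (Suc n)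
  then have "artin_perm (expand (delta (Suc n))) = transpose n (Suc n) \<circ> cycle_down n"
    by (simp add: delta_Suc expand_def artin_perm_append artin_perm_band_word)
  also have "\<dots> = cycle_down (Suc n)"
    using Suc.hyps by (auto simp: transpose_def cycle_down_def fun_eq_iff)
  finally show ?case .
qed

lemma braid_eq_delta_invariants:
  assumes "positive_word n L" and "braid_eq n (expand (delta n)) (expand L)" and "1 \<le> n"
  shows "band_perm L = cycle_down n" and "length L + 1 = n"
proof -
  show "band_perm L = cycle_down n"
    using braid_eq_imp_artin_perm_eq[OF assms(2)]
    by (simp add: artin_perm_delta[OF assms(3)] artin_perm_expand[OF assms(1)])
  have "int (length (delta n)) = int (length L)"
    using braid_eq_imp_exp_sum_eq[OF assms(2)] by (simp add: exp_sum_expand)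
  then show "length L + 1 = n"
    using assms(3) by (simp add: delta_def)
qed

section \<open>Hurwitz moves\<close>

lemma transpose_comp_transpose:
  "transpose a b \<circ> transpose i j = transpose (transpose a b i) (transpose a b j) \<circ> transpose a b"
  using transpose_comp_eq[of "transpose a b" "transpose a b i" "transpose a b j"] by simp

lemma band_transp_comp_band_transp:
  "band_transp a \<circ> band_transp e
     = band_transp (map_prod (band_transp a) (band_transp a) e) \<circ> band_transp a"
  unfolding band_transp_def fst_map_prod snd_map_prod by (rule transpose_comp_transpose)

lemma band_transp_comp_band_perm:
  "band_transp a \<circ> band_perm L
     = band_perm (map (map_prod (band_transp a) (band_transp a)) L) \<circ> band_transp a"
proof (induction L)
  case (Cons e L)
  let ?c = "map_prod (band_transp a) (band_transp a)"
  have "band_transp a \<circ> band_perm (e # L) = (band_transp a \<circ> band_transp e) \<circ> band_perm L"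
    by (simp add: comp_assoc)
  also have "\<dots> = band_transp (?c e) \<circ> (band_transp a \<circ> band_perm L)"
    by (simp only: band_transp_comp_band_transp[of a e] comp_assoc)
  also have "\<dots> = band_perm (map ?c (e # L)) \<circ> band_transp a"
    by (simp only: Cons.IH list.map band_perm.simps comp_assoc)
  finally show ?case .
qed simp

lemma band_perm_move_right:
  "band_perm (X @ a # Y)
     = band_perm (X @ map (map_prod (band_transp a) (band_transp a)) Y) \<circ> band_transp a"
  by (simp add: band_perm_append band_transp_comp_band_perm comp_assoc)

section \<open>Connected components of a graph given by an edge list\<close>

definition linked :: "('a \<times> 'a) list \<Rightarrow> 'a \<Rightarrow> 'a \<Rightarrow> bool" where
  "linked M = equivclp (\<lambda>x y. (x, y) \<in> set M)"

lemma equivp_linked: "equivp (linked M)"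
  by (simp add: linked_def)

lemma linked_edge: "(x, y) \<in> set M \<Longrightarrow> linked M x y"
  unfolding linked_def by (rule r_into_equivclp)

lemma linked_sym: "linked M x y \<Longrightarrow> linked M y x"
  unfolding linked_def by (rule equivclp_sym)

lemma linked_empty: "linked [] x y \<Longrightarrow> x = y"
  unfolding linked_def by (induction rule: equivclp_induct) simp_all

lemma linked_Cons: "linked M x y \<Longrightarrow> linked (e # M) x y"
  unfolding linked_def
proof (induction rule: equivclp_induct)
  case (step y z)
  then have "(y, z) \<in> set (e # M) \<or> (z, y) \<in> set (e # M)" by auto
  with step.IH show ?case by (rule equivclp_into_equivclp)
qed simp

lemma linked_drop_loop: "linked ((u, u) # M) x y \<Longrightarrow> linked M x y"
  unfolding linked_def
proof (induction rule: equivclp_induct)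
  case (step y z)
  then consider "y = z" | "(y, z) \<in> set M \<or> (z, y) \<in> set M" by auto
  then show ?case
    using step.IH by cases (auto intro: equivclp_into_equivclp)
qed simp

lemma linked_map: "linked M x y \<Longrightarrow> linked (map (map_prod f f) M) (f x) (f y)"
  unfolding linked_def
proof (induction rule: equivclp_induct)
  case (step y z)
  then have "(f y, f z) \<in> set (map (map_prod f f) M) \<or> (f z, f y) \<in> set (map (map_prod f f) M)"
    by force
  with step.IH show ?case by (rule equivclp_into_equivclp)
qed simp

text \<open>Each edge lowers the number of components by at most one: contract the first edge.\<close>

lemma card_le_length_if_linked:
  assumes "finite V" and "finite R" and "\<forall>x\<in>V. \<exists>r\<in>R. linked M x r"
  shows "card V \<le> length M + card R"
  using assms
proof (induction "length M" arbitrary: M V R)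
  case 0
  then have "V \<subseteq> R"
    using linked_empty by fastforce
  then show ?case using 0 by (simp add: card_mono)
next
  case (Suc k)
  obtain u v M' where M: "M = (u, v) # M'"
    using Suc.hyps(2) by (cases M) auto
  define f where "f = (\<lambda>x. if x = v then u else x)"
  have "\<exists>r\<in>f ` R. linked (map (map_prod f f) M') (f x) r" if "x \<in> V" for x
  proof -
    obtain r where "r \<in> R" and "linked M x r" using Suc.prems(3) \<open>x \<in> V\<close> by blast
    moreover have "f u = u" "f v = u" by (simp_all add: f_def)
    ultimately have "linked ((u, u) # map (map_prod f f) M') (f x) (f r)"
      using linked_map[of M x r f] by (simp add: M)
    then have "linked (map (map_prod f f) M') (f x) (f r)"
      by (rule linked_drop_loop)
    with \<open>r \<in> R\<close> show ?thesis by blast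
  qed
  moreover have "k = length (map (map_prod f f) M')"
    using Suc.hyps(2) by (simp add: M)
  ultimately have "card (f ` V) \<le> k + card (f ` R)"
    using Suc.hyps(1)[of "map (map_prod f f) M'" "f ` V" "f ` R"] Suc.prems(1,2) by blast
  also have "\<dots> \<le> k + card R"
    using card_image_le[OF Suc.prems(2)] by simp
  finally have "card (f ` V) \<le> k + card R" .
  moreover have "card V \<le> card (f ` V) + 1"
  proof -
    have "inj_on f (V - {v})" by (auto simp: f_def inj_on_def)
    then have "card (V - {v}) \<le> card (f ` V)"
      using Suc.prems(1) by (metis card_image card_mono finite_imageI image_mono Diff_subset)
    then show ?thesis
      using Suc.prems(1) by (simp add: card_Diff_singleton_if split: if_splits)
  qed
  ultimately show ?case using Suc.hyps(2) by simp
qed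

lemma linked_band_perm: "linked M x (band_perm M x)"
proof (induction M)
  case (Cons e M)
  have "linked (e # M) y (band_transp e y)" for y
  proof (cases "band_transp e y = y")
    case False
    then have "e = (y, band_transp e y) \<or> e = (band_transp e y, y)"
      by (cases e) (auto simp: band_transp_def transpose_def split: if_splits)
    then show ?thesis
      using linked_edge[of _ _ "e # M"] linked_sym by fastforce
  qed (simp add: linked_def)
  then have "linked (e # M) (band_perm M x) (band_perm (e # M) x)"
    by simp
  with linked_Cons[OF Cons.IH] show ?case
    unfolding linked_def by (rule equivclp_trans)
qed (simp add: linked_def)

section \<open>Obstructing pairs keep the \<open>n\<close>-cycle a single orbit\<close>

lemma equivp_chain:
  assumes "equivp E" and "\<And>y. lo \<le> y \<Longrightarrow> y < hi \<Longrightarrow> E (Suc y) y"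
  shows "lo \<le> x \<Longrightarrow> x \<le> hi \<Longrightarrow> E x lo"
proof (induction x)
  case (Suc y)
  show ?case
  proof (cases "Suc y = lo")
    case False
    with Suc have "E y lo" and "E (Suc y) y"
      using assms(2)[of y] by simp_all
    then show ?thesis using equivp_transp[OF assms(1)] by blast
  qed (use equivp_reflp[OF assms(1)] in simp)
qed (use equivp_reflp[OF assms(1)] in simp)

lemma cycle_down_crossing_steps:
  assumes E: "equivp E" and order: "1 \<le> q" "q < r" "r < s" "s < t" "t \<le> n"
    and orbit: "\<And>x. E x (cycle_down n (transpose q s (transpose r t x)))"
    and y: "1 \<le> y" "y < n"
  shows "E (Suc y) y"
proof -
  note trans = equivp_transp[OF E] and sym = equivp_symp[OF E]
  have step: "E (Suc y) y" if "1 \<le> y" "y < n" "Suc y \<notin> {q, r, s, t}" for y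
    using orbit[of "Suc y"] that by (simp add: cycle_down_def)
  have qr: "E (r - 1) q"
    by (rule equivp_chain[OF E, where hi = "r - 1"]) (use order in \<open>auto intro: step\<close>)
  have rs: "E (s - 1) r"
    by (rule equivp_chain[OF E, where hi = "s - 1"]) (use order in \<open>auto intro: step\<close>)
  have st: "E (t - 1) s"
    by (rule equivp_chain[OF E, where hi = "t - 1"]) (use order in \<open>auto intro: step\<close>)
  have jq: "E q (s - 1)" and jr: "E r (t - 1)" and jt: "E t (r - 1)"
    using orbit[of q] orbit[of r] orbit[of t] order by (simp_all add: cycle_down_def)
  have js: "E s (q - 1)" if "2 \<le> q"
    using orbit[of s] order that by (simp add: cycle_down_def)
  have "E r q" "E s q" "E t q" "E (s - 1) q" "E (t - 1) q"
    using qr rs st jq jr jt by (meson sym trans)+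
  moreover have "E (q - 1) q" if "2 \<le> q"
    using js[OF that] \<open>E s q\<close> by (meson sym trans)
  ultimately have "E (Suc y) q" and "E y q" if "Suc y \<in> {q, r, s, t}"
    using that y qr equivp_reflp[OF E] by auto
  then show ?thesis
    using step[OF y] by (meson sym trans)
qed

lemma cycle_down_three_cycle_steps:
  assumes E: "equivp E" and order: "1 \<le> r" "r < s" "s < t" "t \<le> n"
    and orbit: "\<And>x. E x (cycle_down n (transpose s t (transpose r s x)))"
    and y: "1 \<le> y" "y < n"
  shows "E (Suc y) y"
proof -
  note trans = equivp_transp[OF E] and sym = equivp_symp[OF E]
  have step: "E (Suc y) y" if "1 \<le> y" "y < n" "Suc y \<notin> {r, s, t}" for y
    using orbit[of "Suc y"] that by (simp add: cycle_down_def)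
  have rs: "E (s - 1) r"
    by (rule equivp_chain[OF E, where hi = "s - 1"]) (use order in \<open>auto intro: step\<close>)
  have st: "E (t - 1) s"
    by (rule equivp_chain[OF E, where hi = "t - 1"]) (use order in \<open>auto intro: step\<close>)
  have jr: "E r (t - 1)" and jt: "E t (s - 1)"
    using orbit[of r] orbit[of t] order by (simp_all add: cycle_down_def)
  have js: "E s (r - 1)" if "2 \<le> r"
    using orbit[of s] order that by (simp add: cycle_down_def)
  have "E s r" "E t r" "E (t - 1) r"
    using rs st jr jt by (meson sym trans)+
  moreover have "E (r - 1) r" if "2 \<le> r"
    using js[OF that] \<open>E s r\<close> by (meson sym trans)
  ultimately have "E (Suc y) r" and "E y r" if "Suc y \<in> {r, s, t}"
    using that y rs equivp_reflp[OF E] by auto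
  then show ?thesis
    using step[OF y] by (meson sym trans)
qed

lemma obstructing_cases:
  assumes "obstructing n a b"
  obtains (equal) "band_transp b \<circ> band_transp a = id"
  | (crossing) q r s t where "1 \<le> q" "q < r" "r < s" "s < t" "t \<le> n"
      "band_transp b \<circ> band_transp a = transpose q s \<circ> transpose r t"
  | (three_cycle) r s t where "1 \<le> r" "r < s" "s < t" "t \<le> n"
      "band_transp b \<circ> band_transp a = transpose s t \<circ> transpose r s"
  using assms unfolding obstructing_def
proof (elim disjE exE conjE)
  fix t s r q
  assume "t \<le> n" "s < t" "r < s" "q < r" "1 \<le> q" "a = (t, r)" "b = (s, q)"
  then show thesis
    by (intro crossing[of q r s t]) (simp_all add: band_transp_def fun_eq_iff transpose_def)
next
  fix t s r q
  assume "t \<le> n" "s < t" "r < s" "q < r" "1 \<le> q" "a = (s, q)" "b = (t, r)"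
  then show thesis
    by (intro crossing[of q r s t]) (simp_all add: band_transp_def fun_eq_iff transpose_def)
next
  fix t s r
  assume "t \<le> n" "s < t" "r < s" "1 \<le> r" "a = (s, r)" "b = (t, s)"
  then show thesis
    by (intro three_cycle[of r s t]) (simp_all add: band_transp_def fun_eq_iff transpose_def)
next
  fix t s r
  assume "t \<le> n" "s < t" "r < s" "1 \<le> r" "a = (t, s)" "b = (t, r)"
  then show thesis
    by (intro three_cycle[of r s t]) (simp_all add: band_transp_def fun_eq_iff transpose_def)
next
  fix t s r
  assume "t \<le> n" "s < t" "r < s" "1 \<le> r" "a = (t, r)" "b = (s, r)"
  then show thesis
    by (intro three_cycle[of r s t]) (simp_all add: band_transp_def fun_eq_iff transpose_def)
qed (simp add: equal band_transp_def)

lemma obstructing_single_orbit: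
  assumes E: "equivp E" and "obstructing n a b"
    and orbit: "\<And>x. E x (cycle_down n (band_transp b (band_transp a x)))"
    and "x \<in> {1..n}"
  shows "E x 1"
proof -
  have "E (Suc y) y" if "1 \<le> y" "y < n" for y
    using \<open>obstructing n a b\<close>
  proof (cases rule: obstructing_cases)
    case equal
    then show ?thesis
      using orbit[of "Suc y"] that by (simp add: fun_eq_iff cycle_down_def)
  next
    case (crossing q r s t)
    then show ?thesis
      using orbit that by (intro cycle_down_crossing_steps[OF E]) (simp_all add: fun_eq_iff)
  next
    case (three_cycle r s t)
    then show ?thesis
      using orbit that by (intro cycle_down_three_cycle_steps[OF E]) (simp_all add: fun_eq_iff)
  qed
  then show ?thesis
    using equivp_chain[OF E, of 1 n x] \<open>x \<in> {1..n}\<close> by simp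
qed

lemma obstructing_factor_not_cycle_down:
  assumes perm: "band_perm (X @ [a] @ Y @ [b] @ Z) = cycle_down n"
    and len: "length (X @ [a] @ Y @ [b] @ Z) + 1 = n"
    and "obstructing n a b"
  shows False
proof -
  define M where "M = X @ map (map_prod (band_transp a) (band_transp a))
    (Y @ map (map_prod (band_transp b) (band_transp b)) Z)"
  have "band_perm (X @ [a] @ Y @ [b] @ Z) = band_perm M \<circ> band_transp a \<circ> band_transp b"
    using band_perm_move_right[of "X @ a # Y" b Z] band_perm_move_right[of X a]
    by (simp add: M_def)
  then have "band_perm M = cycle_down n \<circ> band_transp b \<circ> band_transp a"
    using perm by (simp add: fun_eq_iff band_transp_def) (metis transpose_involutory)
  then have "\<forall>x\<in>{1..n}. linked M x 1"
    using obstructing_single_orbit[OF equivp_linked \<open>obstructing n a b\<close>] linked_band_perm[of M]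
    by simp
  then have "card {1..n} \<le> length M + card {1::nat}"
    by (intro card_le_length_if_linked) auto
  moreover have "length M + 3 = n"
    using len by (simp add: M_def)
  ultimately show False by simp
qed

theorem lemma3p3:
  fixes n :: nat and A :: "(nat \<times> nat) list"
  assumes "positive_word n A"
    and "braid_le n [] (expand A)"
    and "braid_le n (expand A) (expand (delta n))"
  shows "\<not> (\<exists>B a C b D. positive_word n B \<and> positive_word n C \<and> positive_word n D \<and>
            valid_band n a \<and> valid_band n b \<and> obstructing n a b \<and>
            braid_eq n (expand A) (expand (B @ [a] @ C @ [b] @ D)))"
proof
  assume "\<exists>B a C b D. positive_word n B \<and> positive_word n C \<and> positive_word n D \<and>
            valid_band n a \<and> valid_band n b \<and> obstructing n a b \<and>
            braid_eq n (expand A) (expand (B @ [a] @ C @ [b] @ D))"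
  then obtain B a C b D where pos: "positive_word n B" "positive_word n C" "positive_word n D"
      "valid_band n a" "valid_band n b"
    and "obstructing n a b" and A: "braid_eq n (expand A) (expand (B @ [a] @ C @ [b] @ D))"
    by blast
  obtain P1 P2 where "positive_word n P1" "positive_word n P2"
    and delta: "braid_eq n (expand (delta n)) (expand P1 @ expand A @ expand P2)"
    using assms(3) unfolding braid_le_def by blast
  define L where "L = (P1 @ B) @ [a] @ C @ [b] @ (D @ P2)"
  have "positive_word n L"
    using pos \<open>positive_word n P1\<close> \<open>positive_word n P2\<close> by (auto simp: L_def positive_word_def)
  moreover have "braid_eq n (expand (delta n)) (expand L)"
    using braid_eq.trans[OF delta braid_eq.ctxt[OF A]] by (simp add: L_def expand_def)
  moreover have "1 \<le> n"
    using \<open>valid_band n a\<close> by (simp add: valid_band_def)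
  ultimately have "band_perm L = cycle_down n" and "length L + 1 = n"
    by (rule braid_eq_delta_invariants)+
  then show False
    unfolding L_def using \<open>obstructing n a b\<close> by (rule obstructing_factor_not_cycle_down)
qed

end
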